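(* Let $(a_n)_{n\ge 1}$ be a sequence of strictly positive real numbers with $\sum_{n\ge1}(1+n^2)^5a_n^2<\infty$. Let $H=\mathbb{R}\times l^2\times l^2$ and let $F:H\to H$ be defined, for $y=(x,(u_n)_{n\ge1},(v_n)_{n\ge1})\in H$, by $$F(y)=\Big(\sum_{n\ge1} n a_n^{1/2}\big(\sin(nx)u_n+\cos(nx)v_n\big),\ \big(a_n^{1/2}\cos(nx)\big)_{n\ge1},\ \big(-a_n^{1/2}\sin(nx)\big)_{n\ge1}\Big).$$ Let $W$ be a cylindrical Wiener process on $H$ and $\sigma$ the projection onto the first coordinate. For $N\ge1$ define $\Pi_N:H\to H$ by $\Pi_N(x,(u_n)_n,(v_n)_n)=(x,(u_1,\dots,u_N,0,0,\dots),(v_1,\dots,v_N,0,0,\dots))$. Fix $y\in H$, let $Y$ be the strong solution of $dY_t=F(Y_t)\,dt+\sigma\,dW_t$, $Y_0=y$, and let $Y^{(N)}$ be the strong solution of the (finite-dimensional) equation $dY^{(N)}_t=\Pi_N F(Y^{(N)}_t)\,dt+\sigma\,dW_t$, $Y^{(N)}_0=\Pi_N y$, driven by the same $W$. Then for all $T>0$ and all $\omega\in\Omega$, $$\lim_{N\to\infty}\sup_{0\le t\le T}\|Y^{(N)}(t)-Y(t)\|_H^2=0.$$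
   Context: $H=\mathbb{R}\times l^2\times l^2$ is the Hilbert space with norm $\|y\|_H^2=|x|^2+\|(u_n)_n\|_{l^2}^2+\|(v_n)_n\|_{l^2}^2$. $\sigma W_t=(\beta_t,0,0)$ with $\beta$ a standard one-dimensional Brownian motion. The equation for $Y^{(N)}$ lives in $\mathbb{R}\times\mathbb{R}^N\times\mathbb{R}^N$ (identified with a subspace of $H$) and has a unique strong solution. *)

theory Defs
  imports "HOL-Analysis.Analysis"
begin

text \<open>Elements of H = R x l2 x l2 are represented as triples (x, u, v) with
  u, v :: nat => real, where the index 0 is unused (forced to be 0) so that
  u n is the paper's u_n for n >= 1.\<close>

type_synonym hpt = "real \<times> (nat \<Rightarrow> real) \<times> (nat \<Rightarrow> real)"

definition inH :: "hpt \<Rightarrow> bool" where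
  "inH y = (case y of (x, u, v) \<Rightarrow>
      u 0 = 0 \<and> v 0 = 0 \<and> summable (\<lambda>n. (u n)\<^sup>2) \<and> summable (\<lambda>n. (v n)\<^sup>2))"

definition hnorm2 :: "hpt \<Rightarrow> real" where
  "hnorm2 y = (case y of (x, u, v) \<Rightarrow> x\<^sup>2 + (\<Sum>n. (u n)\<^sup>2) + (\<Sum>n. (v n)\<^sup>2))"

definition hsub :: "hpt \<Rightarrow> hpt \<Rightarrow> hpt" where
  "hsub y z = (fst y - fst z, (\<lambda>n. fst (snd y) n - fst (snd z) n),
                              (\<lambda>n. snd (snd y) n - snd (snd z) n))"

definition Fdrift :: "(nat \<Rightarrow> real) \<Rightarrow> hpt \<Rightarrow> hpt" where
  "Fdrift a y = (case y of (x, u, v) \<Rightarrow>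
     ((\<Sum>n. real n * sqrt (a n) * (sin (real n * x) * u n + cos (real n * x) * v n)),
      (\<lambda>n. if n = 0 then 0 else sqrt (a n) * cos (real n * x)),
      (\<lambda>n. if n = 0 then 0 else - sqrt (a n) * sin (real n * x))))"

definition PiN :: "nat \<Rightarrow> hpt \<Rightarrow> hpt" where
  "PiN N y = (case y of (x, u, v) \<Rightarrow>
     (x, (\<lambda>n. if n \<le> N then u n else 0), (\<lambda>n. if n \<le> N then v n else 0)))"

text \<open>Pathwise strong solution on [0,\<infinity>) of dY = G(Y) dt + (d beta, 0, 0), Y 0 = y0,
  for a fixed continuous driving path beta with beta 0 = 0. The H-valued
  integral equation is written componentwise.\<close>
definition is_solution :: "(hpt \<Rightarrow> hpt) \<Rightarrow> (real \<Rightarrow> real) \<Rightarrow> hpt \<Rightarrow> (real \<Rightarrow> hpt) \<Rightarrow> bool" where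
  "is_solution G beta y0 Y \<longleftrightarrow>
     (\<forall>t\<ge>0. inH (Y t)) \<and>
     (\<forall>t0\<ge>0. ((\<lambda>t. hnorm2 (hsub (Y t) (Y t0))) \<longlongrightarrow> 0) (at t0 within {0..})) \<and>
     (\<forall>t\<ge>0.
        fst (Y t) = fst y0 + integral {0..t} (\<lambda>s. fst (G (Y s))) + beta t \<and>
        (\<forall>n. fst (snd (Y t)) n = fst (snd y0) n + integral {0..t} (\<lambda>s. fst (snd (G (Y s))) n)) \<and>
        (\<forall>n. snd (snd (Y t)) n = snd (snd y0) n + integral {0..t} (\<lambda>s. snd (snd (G (Y s))) n)))"

end

theory Submission
  imports Defs
begin

text \<open>Only the \<open>x\<close>-component is coupled nonlinearly: the \<open>u\<^sub>n\<close>- and \<open>v\<^sub>n\<close>-components of both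
  solutions are integrals of \<open>a\<^sub>n\<^sup>1\<^sup>/\<^sup>2 cos (n x)\<close> and \<open>-a\<^sub>n\<^sup>1\<^sup>/\<^sup>2 sin (n x)\<close>, and the Brownian
  increments cancel in the difference of the \<open>x\<close>-equations. Hence with \<open>e(t) = |x\<^sup>N(t) - x(t)|\<close>
  the modes \<open>n \<le> N\<close> differ by at most \<open>n a\<^sub>n\<^sup>1\<^sup>/\<^sup>2 \<integral>\<^sub>0\<^sup>t e\<close>, the modes \<open>n > N\<close> of \<open>Y\<^sup>N\<close> vanish and those
  of \<open>Y\<close> stay close to the initial data. Summing the mode-wise estimates (the weights are
  summable because \<open>\<Sum> n\<^sup>4 a\<^sub>n < \<infinity>\<close>) gives \<open>e(t) \<le> r\<^sub>N T + K \<integral>\<^sub>0\<^sup>t e\<close> with \<open>r\<^sub>N\<close> the tail of a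
  convergent series, so Gronwall's inequality yields \<open>e \<le> r\<^sub>N T exp (K T) \<rightarrow> 0\<close> uniformly on
  \<open>[0, T]\<close>; the \<open>H\<close>-norm of the difference is bounded by this and by tails of the data.\<close>

lemma abs_sin_diff_le: "\<bar>sin x - sin y\<bar> \<le> \<bar>x - y\<bar>" for x y :: real
proof -
  have "\<bar>sin ((x - y) / 2)\<bar> * \<bar>cos ((x + y) / 2)\<bar> \<le> \<bar>x - y\<bar> / 2 * 1"
    using abs_sin_x_le_abs_x[of "(x - y) / 2"] by (intro mult_mono) auto
  then show ?thesis by (simp add: sin_diff_sin abs_mult)
qed

lemma abs_cos_diff_le: "\<bar>cos x - cos y\<bar> \<le> \<bar>x - y\<bar>" for x y :: real
proof -
  have "\<bar>sin ((x + y) / 2)\<bar> * \<bar>sin ((y - x) / 2)\<bar> \<le> 1 * (\<bar>x - y\<bar> / 2)"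
    using abs_sin_x_le_abs_x[of "(y - x) / 2"] by (intro mult_mono) (auto simp: abs_minus_commute)
  then show ?thesis by (simp add: cos_diff_cos abs_mult)
qed

lemma abs_sin_mult_diff_le: "\<bar>sin (c * x) - sin (c * y)\<bar> \<le> \<bar>c\<bar> * \<bar>x - y\<bar>" for c x y :: real
  using abs_sin_diff_le[of "c * x" "c * y"] by (simp add: abs_mult flip: right_diff_distrib)

lemma abs_cos_mult_diff_le: "\<bar>cos (c * x) - cos (c * y)\<bar> \<le> \<bar>c\<bar> * \<bar>x - y\<bar>" for c x y :: real
  using abs_cos_diff_le[of "c * x" "c * y"] by (simp add: abs_mult flip: right_diff_distrib)

lemma abs_le_imp_sq_le: "\<bar>x\<bar> \<le> b \<Longrightarrow> x\<^sup>2 \<le> b\<^sup>2" for x b :: real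
  by (metis abs_ge_zero power2_abs power_mono)

lemma abs_mult_diff_le:
  fixes b c p q :: real
  assumes "\<bar>c\<bar> \<le> 1"
  shows "\<bar>b * p - c * q\<bar> \<le> \<bar>b - c\<bar> * \<bar>p\<bar> + \<bar>p - q\<bar>"
proof -
  have "b * p - c * q = (b - c) * p + c * (p - q)" by (simp add: algebra_simps)
  moreover have "\<bar>c * (p - q)\<bar> \<le> \<bar>p - q\<bar>"
    using assms by (simp add: abs_mult mult_left_le_one_le)
  ultimately show ?thesis by (metis abs_mult abs_triangle_ineq add_left_mono order_trans)
qed

lemma abs_integral_diff_le:
  fixes f g e :: "real \<Rightarrow> real"
  assumes "f integrable_on {0..t}" "g integrable_on {0..t}" "e integrable_on {0..t}"
    and "\<And>s. s \<in> {0..t} \<Longrightarrow> \<bar>f s - g s\<bar> \<le> c * e s"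
  shows "\<bar>integral {0..t} f - integral {0..t} g\<bar> \<le> c * integral {0..t} e"
proof -
  have "norm (integral {0..t} (\<lambda>s. f s - g s)) \<le> integral {0..t} (\<lambda>s. c * e s)"
    using assms by (intro integral_norm_bound_integral integrable_diff integrable_on_mult_right) auto
  then show ?thesis using assms(1,2) by (simp add: integral_diff)
qed

lemma abs_integral_le_const:
  fixes g :: "real \<Rightarrow> real"
  assumes "0 \<le> t" "g integrable_on {0..t}" "\<And>s. s \<in> {0..t} \<Longrightarrow> \<bar>g s\<bar> \<le> c"
  shows "\<bar>integral {0..t} g\<bar> \<le> c * t"
proof -
  have "norm (integral {0..t} g) \<le> integral {0..t} (\<lambda>_. c)"
    using assms by (intro integral_norm_bound_integral) auto
  then show ?thesis using assms(1) by (simp add: mult.commute)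
qed

lemma gronwall_integral_le:
  fixes e :: "real \<Rightarrow> real"
  assumes cont: "continuous_on {0..T} e" and K: "0 \<le> K"
    and le: "\<And>s. s \<in> {0..T} \<Longrightarrow> e s \<le> A + K * integral {0..s} e"
    and t: "t \<in> {0..T}"
  shows "e t \<le> A * exp (K * t)"
proof -
  define g where "g s = exp (- (K * s)) * (A + K * integral {0..s} e)" for s
  have deriv: "(g has_real_derivative exp (- (K * s)) * K * (e s - (A + K * integral {0..s} e))) (at s)"
    if "0 < s" "s < T" for s
  proof -
    have "((\<lambda>u. integral {0..u} e) has_real_derivative e s) (at s within {0..T})"
      using that by (intro integral_has_real_derivative cont) auto
    then have "((\<lambda>u. integral {0..u} e) has_real_derivative e s) (at s)"
      using that by (simp add: at_within_Icc_at)
    then show ?thesis unfolding g_def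
      by (auto intro!: derivative_eq_intros simp: algebra_simps)
  qed
  text \<open>The weighted quantity \<open>g\<close> is non-increasing, so \<open>g t \<le> g 0 = A\<close>.\<close>
  have "g t \<le> g 0"
  proof (rule DERIV_nonpos_imp_decreasing_open[of 0 t g])
    show "0 \<le> t" using t by simp
  next
    fix s :: real assume "0 < s" "s < t"
    then show "\<exists>y. (g has_real_derivative y) (at s) \<and> y \<le> 0"
      using deriv[of s] le[of s] t K
      by (intro exI[of _ "exp (- (K * s)) * K * (e s - (A + K * integral {0..s} e))"])
         (auto simp: mult_nonpos_nonneg mult_nonneg_nonpos)
  next
    have "continuous_on {0..t} (\<lambda>s. integral {0..s} e)"
      using t by (intro indefinite_integral_continuous_1 integrable_continuous_interval
          continuous_on_subset[OF cont]) auto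
    then show "continuous_on {0..t} g" unfolding g_def by (intro continuous_intros)
  qed
  then have "A + K * integral {0..t} e \<le> A * exp (K * t)"
    by (simp add: g_def exp_minus field_simps)
  with le[OF t] show ?thesis by linarith
qed

lemma cSUP_nonneg_le:
  fixes f :: "'a \<Rightarrow> real"
  assumes "S \<noteq> {}" and "\<And>t. t \<in> S \<Longrightarrow> 0 \<le> f t" and "\<And>t. t \<in> S \<Longrightarrow> f t \<le> B"
  shows "0 \<le> (SUP t\<in>S. f t)" and "(SUP t\<in>S. f t) \<le> B"
proof -
  obtain t where t: "t \<in> S" using assms(1) by blast
  have "bdd_above (f ` S)" using assms(3) by (intro bdd_aboveI2)
  then show "0 \<le> (SUP t\<in>S. f t)"
    using t assms(2)[OF t] by (meson cSUP_upper order_trans)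
  show "(SUP t\<in>S. f t) \<le> B" using assms by (intro cSUP_least)
qed

definition tail_sum :: "(nat \<Rightarrow> real) \<Rightarrow> nat \<Rightarrow> real" where
  "tail_sum f N = (\<Sum>n. if N < n then f n else 0)"

lemma summable_tail: "summable f \<Longrightarrow> summable (\<lambda>n. if N < n then f n else 0 :: real)"
  by (subst summable_cong[where g = f]) (auto simp: eventually_sequentially intro: exI[of _ "Suc N"])

lemma tail_sum_nonneg: "summable f \<Longrightarrow> (\<And>n. 0 \<le> f n) \<Longrightarrow> 0 \<le> tail_sum f N"
  unfolding tail_sum_def by (intro suminf_nonneg summable_tail) auto

lemma tail_sum_tendsto_zero:
  assumes f: "summable f"
  shows "tail_sum f \<longlonglongrightarrow> 0"
proof -
  have "tail_sum f = (\<lambda>N. suminf f - (\<Sum>n\<le>N. f n))"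
  proof (rule ext)
    fix N
    have "suminf f - (\<Sum>n. if n \<le> N then f n else 0) = (\<Sum>n. f n - (if n \<le> N then f n else 0))"
      by (intro suminf_diff f summable_If_finite) auto
    moreover have "(\<Sum>n. if n \<le> N then f n else 0) = (\<Sum>n\<le>N. f n)"
      by (subst suminf_finite[of "{..N}"]) auto
    moreover have "(\<lambda>n. f n - (if n \<le> N then f n else 0)) = (\<lambda>n. if N < n then f n else 0)"
      by auto
    ultimately show "tail_sum f N = suminf f - (\<Sum>n\<le>N. f n)" by (simp add: tail_sum_def)
  qed
  moreover have "(\<lambda>N. suminf f - (\<Sum>n\<le>N. f n)) \<longlonglongrightarrow> suminf f - suminf f"
    by (intro tendsto_diff tendsto_const summable_LIMSEQ' f)
  ultimately show ?thesis by simp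
qed

lemma summable_sq_diff:
  fixes f g :: "nat \<Rightarrow> real"
  assumes "summable (\<lambda>n. (f n)\<^sup>2)" "summable (\<lambda>n. (g n)\<^sup>2)"
  shows "summable (\<lambda>n. (f n - g n)\<^sup>2)"
proof (rule summable_comparison_test'[where N = 0])
  show "summable (\<lambda>n. 2 * (f n)\<^sup>2 + 2 * (g n)\<^sup>2)"
    using assms by (intro summable_add summable_mult)
  have "(f n - g n)\<^sup>2 \<le> 2 * (f n)\<^sup>2 + 2 * (g n)\<^sup>2" for n
    using zero_le_power2[of "f n + g n"] by (simp add: power2_eq_square algebra_simps)
  then show "norm ((f n - g n)\<^sup>2) \<le> 2 * (f n)\<^sup>2 + 2 * (g n)\<^sup>2" for n
    by simp
qed

lemma summable_abs_mult:
  fixes f g :: "nat \<Rightarrow> real"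
  assumes "summable (\<lambda>n. (f n)\<^sup>2)" "summable (\<lambda>n. (g n)\<^sup>2)"
  shows "summable (\<lambda>n. \<bar>f n * g n\<bar>)"
proof (rule summable_comparison_test'[where N = 0])
  show "summable (\<lambda>n. ((f n)\<^sup>2 + (g n)\<^sup>2) / 2)"
    using assms by (intro summable_divide summable_add)
  have "0 \<le> (\<bar>f n\<bar> - \<bar>g n\<bar>)\<^sup>2" for n by simp
  then show "norm \<bar>f n * g n\<bar> \<le> ((f n)\<^sup>2 + (g n)\<^sup>2) / 2" for n
    by (simp add: power2_eq_square algebra_simps abs_mult)
qed

text \<open>\<open>amp a n = \<surd>a\<^sub>n\<close>; the unused index 0, where \<open>a 0\<close> is unconstrained, is set to \<open>0\<close>.\<close>
definition amp :: "(nat \<Rightarrow> real) \<Rightarrow> nat \<Rightarrow> real" where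
  "amp a n = (if n = 0 then 0 else sqrt (a n))"

definition xdrift_term :: "(nat \<Rightarrow> real) \<Rightarrow> hpt \<Rightarrow> nat \<Rightarrow> real" where
  "xdrift_term a z n = real n * amp a n *
     (sin (real n * fst z) * fst (snd z) n + cos (real n * fst z) * snd (snd z) n)"

lemma fst_Fdrift: "fst (Fdrift a z) = (\<Sum>n. xdrift_term a z n)"
proof -
  obtain x u v where z: "z = (x, u, v)" by (cases z) auto
  have "(\<lambda>n. real n * sqrt (a n) * (sin (real n * x) * u n + cos (real n * x) * v n))
      = xdrift_term a z"
    by (auto simp: fun_eq_iff xdrift_term_def amp_def z)
  then show ?thesis by (simp add: Fdrift_def z)
qed

lemma u_Fdrift: "fst (snd (Fdrift a z)) n = amp a n * cos (real n * fst z)"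
  and v_Fdrift: "snd (snd (Fdrift a z)) n = - amp a n * sin (real n * fst z)"
  by (cases z; auto simp: Fdrift_def amp_def)+

lemma fst_PiN: "fst (PiN N z) = fst z"
  and u_PiN: "fst (snd (PiN N z)) n = (if n \<le> N then fst (snd z) n else 0)"
  and v_PiN: "snd (snd (PiN N z)) n = (if n \<le> N then snd (snd z) n else 0)"
  by (cases z; auto simp: PiN_def)+

lemma inH_summable_u: "inH z \<Longrightarrow> summable (\<lambda>n. (fst (snd z) n)\<^sup>2)"
  and inH_summable_v: "inH z \<Longrightarrow> summable (\<lambda>n. (snd (snd z) n)\<^sup>2)"
  by (cases z; auto simp: inH_def)+

lemma summable_sq_truncation: "summable (\<lambda>n. (if n \<le> N then f n else 0 :: real)\<^sup>2)"
proof -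
  have "(\<lambda>n. (if n \<le> N then f n else 0)\<^sup>2) = (\<lambda>n. if n \<in> {..N} then (f n)\<^sup>2 else 0)"
    by auto
  then show ?thesis by simp
qed

lemma inH_PiN: "inH z \<Longrightarrow> inH (PiN N z)"
  by (cases z) (auto simp: inH_def PiN_def summable_sq_truncation)

lemma hnorm2_hsub:
  assumes "inH y" "inH z"
  shows "hnorm2 (hsub y z) = (fst y - fst z)\<^sup>2 + (\<Sum>n. (fst (snd y) n - fst (snd z) n)\<^sup>2)
           + (\<Sum>n. (snd (snd y) n - snd (snd z) n)\<^sup>2)"
    and "summable (\<lambda>n. (fst (snd y) n - fst (snd z) n)\<^sup>2)"
    and "summable (\<lambda>n. (snd (snd y) n - snd (snd z) n)\<^sup>2)"
  using assms by (auto simp: hnorm2_def hsub_def intro!: summable_sq_diff inH_summable_u inH_summable_v)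

lemma hnorm2_hsub_ge:
  assumes "inH y" "inH z"
  shows "(fst y - fst z)\<^sup>2 \<le> hnorm2 (hsub y z)"
  unfolding hnorm2_hsub(1)[OF assms]
  using hnorm2_hsub(2,3)[OF assms] by (auto intro!: add_nonneg_nonneg suminf_nonneg)

lemma hnorm2_hsub_nonneg: "inH y \<Longrightarrow> inH z \<Longrightarrow> 0 \<le> hnorm2 (hsub y z)"
  using hnorm2_hsub_ge order_trans zero_le_power2 by blast

lemma is_solution_continuous_fst:
  assumes sol: "is_solution G beta y0 Z"
  shows "continuous_on {0..} (\<lambda>t. fst (Z t))"
  unfolding continuous_on_def
proof
  fix t0 :: real assume t0: "t0 \<in> {0..}"
  have "((\<lambda>t. sqrt (hnorm2 (hsub (Z t) (Z t0)))) \<longlongrightarrow> 0) (at t0 within {0..})"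
    using sol t0 tendsto_real_sqrt by (fastforce simp: is_solution_def)
  moreover have "\<forall>\<^sub>F t in at t0 within {0..}.
      norm (fst (Z t) - fst (Z t0)) \<le> sqrt (hnorm2 (hsub (Z t) (Z t0)))"
  proof (rule eventually_at_filter[THEN iffD2, OF always_eventually], intro allI impI)
    fix t :: real assume "t \<in> {0..}"
    then have "inH (Z t)" "inH (Z t0)"
      using sol t0 by (auto simp: is_solution_def)
    from hnorm2_hsub_ge[OF this]
    show "norm (fst (Z t) - fst (Z t0)) \<le> sqrt (hnorm2 (hsub (Z t) (Z t0)))"
      by (simp add: real_le_rsqrt)
  qed
  ultimately have "((\<lambda>t. fst (Z t) - fst (Z t0)) \<longlongrightarrow> 0) (at t0 within {0..})"
    by (rule Lim_null_comparison[rotated])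
  then show "((\<lambda>t. fst (Z t)) \<longlongrightarrow> fst (Z t0)) (at t0 within {0..})"
    by (simp add: LIM_zero_iff)
qed

lemma amp_nonneg: "\<forall>n\<ge>1. 0 < a n \<Longrightarrow> 0 \<le> amp a n"
  by (auto simp: amp_def Suc_le_eq less_imp_le)

lemma summable_pow4_amp_sq:
  assumes apos: "\<forall>n\<ge>1. 0 < a n"
    and asum: "summable (\<lambda>n. (1 + (real n)\<^sup>2) ^ 5 * (a n)\<^sup>2)"
  shows "summable (\<lambda>n. real n ^ 4 * (amp a n)\<^sup>2)"
proof (rule summable_comparison_test'[where N = 1])
  show "summable (\<lambda>n. (1 + (real n)\<^sup>2) ^ 5 * (a n)\<^sup>2 + inverse (real n ^ 2))"
    by (intro summable_add asum inverse_power_summable) auto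
  fix n :: nat assume n: "1 \<le> n"
  have an: "0 < a n" using apos n by auto
  have "(amp a n)\<^sup>2 = a n" using an n by (simp add: amp_def)
  then have "norm (real n ^ 4 * (amp a n)\<^sup>2) \<le> 2 * (real n ^ 4 * a n)"
    using an by simp
  also have "\<dots> \<le> real n ^ 10 * (a n)\<^sup>2 + inverse (real n ^ 2)"
    using zero_le_power2[of "real n ^ 5 * a n - inverse (real n)"] n
    by (simp add: power2_eq_square field_simps eval_nat_numeral)
  also have "real n ^ 10 * (a n)\<^sup>2 \<le> (1 + (real n)\<^sup>2) ^ 5 * (a n)\<^sup>2"
  proof (rule mult_right_mono)
    have "real n ^ 10 = ((real n)\<^sup>2) ^ 5" by (simp flip: power_mult)
    also have "\<dots> \<le> (1 + (real n)\<^sup>2) ^ 5" by (intro power_mono) auto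
    finally show "real n ^ 10 \<le> (1 + (real n)\<^sup>2) ^ 5" .
  qed simp
  finally show "norm (real n ^ 4 * (amp a n)\<^sup>2) \<le> (1 + (real n)\<^sup>2) ^ 5 * (a n)\<^sup>2 + inverse (real n ^ 2)"
    by simp
qed

lemma summable_pow_amp_sq:
  assumes apos: "\<forall>n\<ge>1. 0 < a n"
    and asum: "summable (\<lambda>n. (1 + (real n)\<^sup>2) ^ 5 * (a n)\<^sup>2)"
    and k: "k \<le> 4"
  shows "summable (\<lambda>n. real n ^ k * (amp a n)\<^sup>2)"
proof (rule summable_comparison_test'[OF summable_pow4_amp_sq[OF apos asum], where N = 1])
  fix n :: nat assume "1 \<le> n"
  then have "real n ^ k \<le> real n ^ 4" using k by (intro power_increasing) auto
  then show "norm (real n ^ k * (amp a n)\<^sup>2) \<le> real n ^ 4 * (amp a n)\<^sup>2"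
    by (simp add: mult_right_mono)
qed

definition drift_bound :: "(nat \<Rightarrow> real) \<Rightarrow> hpt \<Rightarrow> real \<Rightarrow> nat \<Rightarrow> real" where
  "drift_bound a y T n =
     real n * amp a n * (\<bar>fst (snd y) n\<bar> + \<bar>snd (snd y) n\<bar> + 2 * amp a n * T)"

lemma drift_bound_nonneg: "\<forall>n\<ge>1. 0 < a n \<Longrightarrow> 0 \<le> T \<Longrightarrow> 0 \<le> drift_bound a y T n"
  by (simp add: drift_bound_def amp_nonneg)

lemma summable_drift_bound:
  assumes apos: "\<forall>n\<ge>1. 0 < a n"
    and asum: "summable (\<lambda>n. (1 + (real n)\<^sup>2) ^ 5 * (a n)\<^sup>2)"
    and yH: "inH y" and T: "0 \<le> T"
  shows "summable (\<lambda>n. real n * drift_bound a y T n)" and "summable (drift_bound a y T)"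
proof -
  have w: "summable (\<lambda>n. (real n ^ 2 * amp a n)\<^sup>2)"
    using summable_pow4_amp_sq[OF apos asum] by (simp add: power_mult_distrib flip: power_mult)
  have "real n * drift_bound a y T n = \<bar>real n ^ 2 * amp a n * fst (snd y) n\<bar>
      + \<bar>real n ^ 2 * amp a n * snd (snd y) n\<bar> + 2 * T * (real n ^ 2 * (amp a n)\<^sup>2)" for n
    using amp_nonneg[OF apos, of n] by (simp add: drift_bound_def abs_mult algebra_simps power2_eq_square)
  moreover have "summable (\<lambda>n. \<bar>real n ^ 2 * amp a n * fst (snd y) n\<bar>
      + \<bar>real n ^ 2 * amp a n * snd (snd y) n\<bar> + 2 * T * (real n ^ 2 * (amp a n)\<^sup>2))"
    by (intro summable_add summable_mult summable_abs_mult w inH_summable_u inH_summable_v yH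
        summable_pow_amp_sq[OF apos asum]) simp
  ultimately show weighted: "summable (\<lambda>n. real n * drift_bound a y T n)" by simp
  show "summable (drift_bound a y T)"
  proof (rule summable_comparison_test'[OF weighted, where N = 1])
    fix n :: nat assume "1 \<le> n"
    then show "norm (drift_bound a y T n) \<le> real n * drift_bound a y T n"
      using drift_bound_nonneg[OF apos T, of y n] by (simp add: mult_le_cancel_right1)
  qed
qed

text \<open>The mask \<open>M\<close> selects the modes whose \<open>u\<close>- and \<open>v\<close>-drift is kept: \<open>M = (\<lambda>_. True)\<close> gives
  the full equation, \<open>M = (\<lambda>n. n \<le> N)\<close> the projected one.\<close>
locale masked_solution =
  fixes a :: "nat \<Rightarrow> real" and M :: "nat \<Rightarrow> bool" and G :: "hpt \<Rightarrow> hpt"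
    and beta :: "real \<Rightarrow> real" and y0 :: hpt and Z :: "real \<Rightarrow> hpt"
  assumes amp_nonneg: "\<And>n. 0 \<le> amp a n"
    and solution: "is_solution G beta y0 Z"
    and fst_G: "\<And>z. fst (G z) = (\<Sum>n. xdrift_term a z n)"
    and u_G: "\<And>z n. fst (snd (G z)) n = (if M n then amp a n * cos (real n * fst z) else 0)"
    and v_G: "\<And>z n. snd (snd (G z)) n = (if M n then - amp a n * sin (real n * fst z) else 0)"
begin

lemma inH: "0 \<le> t \<Longrightarrow> inH (Z t)"
  using solution by (simp add: is_solution_def)

lemma continuous_on_x: "S \<subseteq> {0..} \<Longrightarrow> continuous_on S (\<lambda>t. fst (Z t))"
  using continuous_on_subset[OF is_solution_continuous_fst[OF solution]] .

lemma integrable_along_x: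
  fixes f :: "real \<Rightarrow> real"
  assumes "continuous_on UNIV f" "0 \<le> s"
  shows "(\<lambda>r. f (fst (Z r))) integrable_on {s..t}"
proof (rule integrable_continuous_interval)
  show "continuous_on {s..t} (\<lambda>r. f (fst (Z r)))"
    using assms by (intro continuous_on_compose2[OF assms(1) continuous_on_x]) auto
qed

lemma x_eq: "0 \<le> t \<Longrightarrow> fst (Z t) = fst y0 + integral {0..t} (\<lambda>s. \<Sum>n. xdrift_term a (Z s) n) + beta t"
  using solution by (simp add: is_solution_def fst_G)

lemma u_eq: "0 \<le> t \<Longrightarrow>
    fst (snd (Z t)) n = fst (snd y0) n + integral {0..t} (\<lambda>s. if M n then amp a n * cos (real n * fst (Z s)) else 0)"
  using solution by (simp add: is_solution_def u_G)

lemma v_eq: "0 \<le> t \<Longrightarrow>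
    snd (snd (Z t)) n = snd (snd y0) n + integral {0..t} (\<lambda>s. if M n then - amp a n * sin (real n * fst (Z s)) else 0)"
  using solution by (simp add: is_solution_def v_G)

lemma u_eq_masked: "0 \<le> t \<Longrightarrow> M n \<Longrightarrow>
    fst (snd (Z t)) n = fst (snd y0) n + integral {0..t} (\<lambda>s. amp a n * cos (real n * fst (Z s)))"
  and v_eq_masked: "0 \<le> t \<Longrightarrow> M n \<Longrightarrow>
    snd (snd (Z t)) n = snd (snd y0) n + integral {0..t} (\<lambda>s. - amp a n * sin (real n * fst (Z s)))"
  using u_eq v_eq by simp_all

lemma u_eq_unmasked: "0 \<le> t \<Longrightarrow> \<not> M n \<Longrightarrow> fst (snd (Z t)) n = fst (snd y0) n"
  and v_eq_unmasked: "0 \<le> t \<Longrightarrow> \<not> M n \<Longrightarrow> snd (snd (Z t)) n = snd (snd y0) n"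
  using u_eq v_eq by simp_all

lemma u_bound: "0 \<le> t \<Longrightarrow> \<bar>fst (snd (Z t)) n\<bar> \<le> \<bar>fst (snd y0) n\<bar> + amp a n * t"
proof (cases "M n")
  case True
  assume t: "0 \<le> t"
  have "\<bar>integral {0..t} (\<lambda>s. amp a n * cos (real n * fst (Z s)))\<bar> \<le> amp a n * t"
    using t amp_nonneg[of n]
    by (intro abs_integral_le_const integrable_along_x[where f = "\<lambda>x. amp a n * cos (real n * x)"]
        continuous_intros)
       (auto simp: abs_mult intro: mult_left_le)
  then show ?thesis using u_eq_masked[OF t True] by linarith
qed (use u_eq_unmasked amp_nonneg in simp)

lemma v_bound: "0 \<le> t \<Longrightarrow> \<bar>snd (snd (Z t)) n\<bar> \<le> \<bar>snd (snd y0) n\<bar> + amp a n * t"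
proof (cases "M n")
  case True
  assume t: "0 \<le> t"
  have "\<bar>integral {0..t} (\<lambda>s. - amp a n * sin (real n * fst (Z s)))\<bar> \<le> amp a n * t"
    using t amp_nonneg[of n]
    by (intro abs_integral_le_const integrable_along_x[where f = "\<lambda>x. - amp a n * sin (real n * x)"]
        continuous_intros)
       (auto simp: abs_mult intro: mult_left_le)
  then show ?thesis using v_eq_masked[OF t True] by linarith
qed (use v_eq_unmasked amp_nonneg in simp)

lemma continuous_on_u: "continuous_on {0..T} (\<lambda>t. fst (snd (Z t)) n)"
proof (cases "M n")
  case True
  have "continuous_on {0..T}
      (\<lambda>t. fst (snd y0) n + integral {0..t} (\<lambda>s. amp a n * cos (real n * fst (Z s))))"
    by (intro continuous_intros indefinite_integral_continuous_1
        integrable_along_x[where f = "\<lambda>x. amp a n * cos (real n * x)"]) auto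
  then show ?thesis by (rule continuous_on_eq) (simp add: u_eq_masked True)
next
  case False
  show ?thesis
    by (rule continuous_on_eq[OF continuous_on_const]) (simp add: u_eq_unmasked False)
qed

lemma continuous_on_v: "continuous_on {0..T} (\<lambda>t. snd (snd (Z t)) n)"
proof (cases "M n")
  case True
  have "continuous_on {0..T}
      (\<lambda>t. snd (snd y0) n + integral {0..t} (\<lambda>s. - amp a n * sin (real n * fst (Z s))))"
    by (intro continuous_intros indefinite_integral_continuous_1
        integrable_along_x[where f = "\<lambda>x. - amp a n * sin (real n * x)"]) auto
  then show ?thesis by (rule continuous_on_eq) (simp add: v_eq_masked True)
next
  case False
  show ?thesis
    by (rule continuous_on_eq[OF continuous_on_const]) (simp add: v_eq_unmasked False)
qed

lemma abs_xdrift_term_le: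
  assumes s: "s \<in> {0..T}"
  shows "\<bar>xdrift_term a (Z s) n\<bar> \<le> drift_bound a y0 T n"
proof -
  let ?x = "real n * fst (Z s)"
  have "\<bar>sin ?x * fst (snd (Z s)) n + cos ?x * snd (snd (Z s)) n\<bar>
      \<le> \<bar>fst (snd (Z s)) n\<bar> + \<bar>snd (snd (Z s)) n\<bar>"
    by (rule order_trans[OF abs_triangle_ineq add_mono])
       (simp_all add: abs_mult mult_left_le_one_le)
  also have "\<dots> \<le> \<bar>fst (snd y0) n\<bar> + \<bar>snd (snd y0) n\<bar> + 2 * amp a n * T"
    using s u_bound[of s n] v_bound[of s n]
      mult_left_mono[of s T "amp a n"] amp_nonneg[of n] by auto
  finally show ?thesis
    unfolding xdrift_term_def drift_bound_def using amp_nonneg[of n]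
    by (simp add: abs_mult mult_left_mono)
qed

lemma summable_xdrift_term:
  "summable (drift_bound a y0 T) \<Longrightarrow> s \<in> {0..T} \<Longrightarrow> summable (xdrift_term a (Z s))"
  by (rule summable_comparison_test'[where N = 0]) (auto intro: abs_xdrift_term_le)

lemma continuous_on_xdrift:
  assumes "summable (drift_bound a y0 T)"
  shows "continuous_on {0..T} (\<lambda>s. \<Sum>n. xdrift_term a (Z s) n)"
proof (rule uniform_limit_theorem)
  show "uniform_limit {0..T} (\<lambda>m s. \<Sum>n<m. xdrift_term a (Z s) n)
      (\<lambda>s. \<Sum>n. xdrift_term a (Z s) n) sequentially"
    by (rule Weierstrass_m_test[OF _ assms]) (auto intro: abs_xdrift_term_le)
  show "\<forall>\<^sub>F m in sequentially. continuous_on {0..T} (\<lambda>s. \<Sum>n<m. xdrift_term a (Z s) n)"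
    unfolding xdrift_term_def
    by (intro always_eventually allI continuous_intros continuous_on_u continuous_on_v
        continuous_on_x) auto
qed simp

end

definition drift_lip :: "(nat \<Rightarrow> real) \<Rightarrow> hpt \<Rightarrow> real \<Rightarrow> real" where
  "drift_lip a y T = (\<Sum>n. real n * drift_bound a y T n)"

definition amp_sq_sum :: "(nat \<Rightarrow> real) \<Rightarrow> real" where
  "amp_sq_sum a = (\<Sum>n. (real n * amp a n)\<^sup>2)"

definition xgap_bound :: "(nat \<Rightarrow> real) \<Rightarrow> hpt \<Rightarrow> real \<Rightarrow> nat \<Rightarrow> real" where
  "xgap_bound a y T N =
     T * tail_sum (drift_bound a y T) N * exp ((drift_lip a y T + 2 * T * amp_sq_sum a) * T)"

definition gap_bound :: "(nat \<Rightarrow> real) \<Rightarrow> hpt \<Rightarrow> real \<Rightarrow> nat \<Rightarrow> real" where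
  "gap_bound a y T N = (1 + 2 * T\<^sup>2 * amp_sq_sum a) * (xgap_bound a y T N)\<^sup>2
    + tail_sum (\<lambda>n. 2 * (fst (snd y) n)\<^sup>2 + 2 * (amp a n * T)\<^sup>2) N
    + tail_sum (\<lambda>n. 2 * (snd (snd y) n)\<^sup>2 + 2 * (amp a n * T)\<^sup>2) N"

lemma summable_amp_sq:
  assumes "\<forall>n\<ge>1. 0 < a n" "summable (\<lambda>n. (1 + (real n)\<^sup>2) ^ 5 * (a n)\<^sup>2)"
  shows "summable (\<lambda>n. (real n * amp a n)\<^sup>2)"
  using summable_pow_amp_sq[OF assms, of 2] by (simp add: power_mult_distrib)

lemma summable_tail_weight:
  assumes "\<forall>n\<ge>1. 0 < a n" "summable (\<lambda>n. (1 + (real n)\<^sup>2) ^ 5 * (a n)\<^sup>2)"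
    and "summable (\<lambda>n. (c n)\<^sup>2)"
  shows "summable (\<lambda>n. 2 * (c n)\<^sup>2 + 2 * (amp a n * T)\<^sup>2)"
  using summable_pow_amp_sq[OF assms(1,2), of 0] assms(3)
  by (auto simp: power_mult_distrib intro!: summable_add summable_mult summable_mult2)

locale galerkin_pair =
  fixes a :: "nat \<Rightarrow> real" and beta :: "real \<Rightarrow> real" and y :: hpt
    and Y :: "real \<Rightarrow> hpt" and YN :: "real \<Rightarrow> hpt" and N :: nat and T :: real
  assumes apos: "\<forall>n\<ge>1. 0 < a n"
    and asum: "summable (\<lambda>n. (1 + (real n)\<^sup>2) ^ 5 * (a n)\<^sup>2)"
    and yH: "inH y"
    and Ysol: "is_solution (Fdrift a) beta y Y"
    and YNsol: "is_solution (\<lambda>z. PiN N (Fdrift a z)) beta (PiN N y) YN"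
    and Tpos: "0 < T"
begin

sublocale full: masked_solution a "\<lambda>_. True" "Fdrift a" beta y Y
  using amp_nonneg[OF apos] Ysol by unfold_locales (simp_all add: fst_Fdrift u_Fdrift v_Fdrift)

sublocale proj: masked_solution a "\<lambda>n. n \<le> N" "\<lambda>z. PiN N (Fdrift a z)" beta "PiN N y" YN
  using amp_nonneg[OF apos] YNsol
  by unfold_locales (simp_all add: fst_PiN u_PiN v_PiN fst_Fdrift u_Fdrift v_Fdrift)

lemma drift_bound_y_nonneg: "0 \<le> drift_bound a y T n"
  using drift_bound_nonneg[OF apos] Tpos by simp

lemma summable_drift_bound_y: "summable (drift_bound a y T)"
  and summable_weighted_drift_bound: "summable (\<lambda>n. real n * drift_bound a y T n)"
  and summable_drift_bound_PiN: "summable (drift_bound a (PiN N y) T)"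
  using summable_drift_bound[OF apos asum yH] summable_drift_bound(2)[OF apos asum inH_PiN[OF yH]]
    Tpos by simp_all

lemma summable_xdrift_term_full: "s \<in> {0..T} \<Longrightarrow> summable (xdrift_term a (Y s))"
  and summable_xdrift_term_proj: "s \<in> {0..T} \<Longrightarrow> summable (xdrift_term a (YN s))"
  using full.summable_xdrift_term proj.summable_xdrift_term
    summable_drift_bound_y summable_drift_bound_PiN by auto

definition xgap :: "real \<Rightarrow> real" where
  "xgap s = \<bar>fst (YN s) - fst (Y s)\<bar>"

lemma xgap_nonneg: "0 \<le> xgap s"
  by (simp add: xgap_def)

lemma continuous_on_xgap: "S \<subseteq> {0..} \<Longrightarrow> continuous_on S xgap"
  unfolding xgap_def by (intro continuous_intros full.continuous_on_x proj.continuous_on_x)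

lemma integrable_xgap: "0 \<le> s \<Longrightarrow> xgap integrable_on {s..t}"
  by (intro integrable_continuous_interval continuous_on_xgap) auto

lemma integral_xgap_nonneg: "0 \<le> integral {0..t} xgap"
  by (cases "0 \<le> t") (auto intro!: integral_nonneg integrable_xgap xgap_nonneg)

lemma integral_xgap_mono: "0 \<le> r \<Longrightarrow> r \<le> t \<Longrightarrow> integral {0..r} xgap \<le> integral {0..t} xgap"
  by (intro integral_subset_le integrable_xgap xgap_nonneg ballI) auto

lemma u_gap_le:
  assumes s: "0 \<le> s" and n: "n \<le> N"
  shows "\<bar>fst (snd (YN s)) n - fst (snd (Y s)) n\<bar> \<le> real n * amp a n * integral {0..s} xgap"
proof -
  have "\<bar>integral {0..s} (\<lambda>r. amp a n * cos (real n * fst (YN r)))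
      - integral {0..s} (\<lambda>r. amp a n * cos (real n * fst (Y r)))\<bar>
      \<le> real n * amp a n * integral {0..s} xgap"
  proof (rule abs_integral_diff_le)
    fix r
    have "\<bar>amp a n * cos (real n * fst (YN r)) - amp a n * cos (real n * fst (Y r))\<bar>
        = amp a n * \<bar>cos (real n * fst (YN r)) - cos (real n * fst (Y r))\<bar>"
      using full.amp_nonneg by (simp add: abs_mult flip: right_diff_distrib)
    also have "\<dots> \<le> amp a n * (real n * xgap r)"
      unfolding xgap_def
      by (intro mult_left_mono full.amp_nonneg) (use abs_cos_mult_diff_le[of "real n"] in simp)
    finally show "\<bar>amp a n * cos (real n * fst (YN r)) - amp a n * cos (real n * fst (Y r))\<bar>
        \<le> real n * amp a n * xgap r" by (simp add: mult_ac)
  qed (use s in \<open>(intro integrable_xgap full.integrable_along_x proj.integrable_along_x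
        continuous_intros | simp)+\<close>)
  then show ?thesis
    using proj.u_eq_masked[OF s, of n] full.u_eq_masked[OF s, of n] n by (simp add: u_PiN)
qed

lemma v_gap_le:
  assumes s: "0 \<le> s" and n: "n \<le> N"
  shows "\<bar>snd (snd (YN s)) n - snd (snd (Y s)) n\<bar> \<le> real n * amp a n * integral {0..s} xgap"
proof -
  have "\<bar>integral {0..s} (\<lambda>r. - amp a n * sin (real n * fst (YN r)))
      - integral {0..s} (\<lambda>r. - amp a n * sin (real n * fst (Y r)))\<bar>
      \<le> real n * amp a n * integral {0..s} xgap"
  proof (rule abs_integral_diff_le)
    fix r
    have "\<bar>- amp a n * sin (real n * fst (YN r)) - - amp a n * sin (real n * fst (Y r))\<bar>
        = amp a n * \<bar>sin (real n * fst (YN r)) - sin (real n * fst (Y r))\<bar>"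
      using full.amp_nonneg by (simp add: abs_mult abs_minus_commute flip: right_diff_distrib)
    also have "\<dots> \<le> amp a n * (real n * xgap r)"
      unfolding xgap_def
      by (intro mult_left_mono full.amp_nonneg) (use abs_sin_mult_diff_le[of "real n"] in simp)
    finally show "\<bar>- amp a n * sin (real n * fst (YN r)) - - amp a n * sin (real n * fst (Y r))\<bar>
        \<le> real n * amp a n * xgap r" by (simp add: mult_ac)
  qed (use s in \<open>(intro integrable_xgap full.integrable_along_x proj.integrable_along_x
        continuous_intros | simp)+\<close>)
  then show ?thesis
    using proj.v_eq_masked[OF s, of n] full.v_eq_masked[OF s, of n] n by (simp add: v_PiN)
qed

lemma u_proj_vanish: "0 \<le> s \<Longrightarrow> N < n \<Longrightarrow> fst (snd (YN s)) n = 0"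
  and v_proj_vanish: "0 \<le> s \<Longrightarrow> N < n \<Longrightarrow> snd (snd (YN s)) n = 0"
  using proj.u_eq_unmasked proj.v_eq_unmasked by (simp_all add: u_PiN v_PiN)

lemma xdrift_term_gap_le:
  assumes s: "s \<in> {0..T}"
  shows "\<bar>xdrift_term a (YN s) n - xdrift_term a (Y s) n\<bar>
    \<le> real n * drift_bound a y T n * xgap s + 2 * (real n * amp a n)\<^sup>2 * integral {0..s} xgap
      + (if N < n then drift_bound a y T n else 0)"
proof (cases "n \<le> N")
  case True
  have s0: "0 \<le> s" using s by simp
  define w where "w = real n * amp a n"
  define A B where "A = real n * fst (YN s)" and "B = real n * fst (Y s)"
  define p q p' q' where "p = fst (snd (YN s)) n" and "q = fst (snd (Y s)) n"
    and "p' = snd (snd (YN s)) n" and "q' = snd (snd (Y s)) n"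
  have w0: "0 \<le> w" unfolding w_def using full.amp_nonneg by simp
  have amp_s: "amp a n * s \<le> amp a n * T" using s full.amp_nonneg by (intro mult_left_mono) auto
  have "\<bar>sin A * p - sin B * q\<bar> \<le> \<bar>sin A - sin B\<bar> * \<bar>p\<bar> + \<bar>p - q\<bar>"
    by (rule abs_mult_diff_le) simp
  also have "\<dots> \<le> real n * xgap s * (\<bar>fst (snd y) n\<bar> + amp a n * T) + w * integral {0..s} xgap"
    using abs_sin_mult_diff_le[of "real n" "fst (YN s)" "fst (Y s)"]
      proj.u_bound[OF s0, of n] u_gap_le[OF s0 True] True amp_s
    unfolding A_def B_def p_def q_def w_def xgap_def
    by (intro add_mono mult_mono) (auto simp: u_PiN)
  finally have sin_part: "\<bar>sin A * p - sin B * q\<bar>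
      \<le> real n * xgap s * (\<bar>fst (snd y) n\<bar> + amp a n * T) + w * integral {0..s} xgap" .
  have "\<bar>cos A * p' - cos B * q'\<bar> \<le> \<bar>cos A - cos B\<bar> * \<bar>p'\<bar> + \<bar>p' - q'\<bar>"
    by (rule abs_mult_diff_le) simp
  also have "\<dots> \<le> real n * xgap s * (\<bar>snd (snd y) n\<bar> + amp a n * T) + w * integral {0..s} xgap"
    using abs_cos_mult_diff_le[of "real n" "fst (YN s)" "fst (Y s)"]
      proj.v_bound[OF s0, of n] v_gap_le[OF s0 True] True amp_s
    unfolding A_def B_def p'_def q'_def w_def xgap_def
    by (intro add_mono mult_mono) (auto simp: v_PiN)
  finally have cos_part: "\<bar>cos A * p' - cos B * q'\<bar>
      \<le> real n * xgap s * (\<bar>snd (snd y) n\<bar> + amp a n * T) + w * integral {0..s} xgap" .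
  have "xdrift_term a (YN s) n - xdrift_term a (Y s) n
      = w * ((sin A * p - sin B * q) + (cos A * p' - cos B * q'))"
    unfolding xdrift_term_def A_def B_def p_def q_def p'_def q'_def w_def by (simp add: algebra_simps)
  moreover have "\<bar>(sin A * p - sin B * q) + (cos A * p' - cos B * q')\<bar>
      \<le> real n * xgap s * (\<bar>fst (snd y) n\<bar> + \<bar>snd (snd y) n\<bar> + 2 * amp a n * T)
        + 2 * w * integral {0..s} xgap"
    using sin_part cos_part abs_triangle_ineq[of "sin A * p - sin B * q" "cos A * p' - cos B * q'"]
    by (simp add: algebra_simps)
  ultimately have "\<bar>xdrift_term a (YN s) n - xdrift_term a (Y s) n\<bar>
      \<le> w * (real n * xgap s * (\<bar>fst (snd y) n\<bar> + \<bar>snd (snd y) n\<bar> + 2 * amp a n * T)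
        + 2 * w * integral {0..s} xgap)"
    using w0 by (simp add: abs_mult mult_left_mono)
  also have "\<dots> = real n * drift_bound a y T n * xgap s + 2 * (real n * amp a n)\<^sup>2 * integral {0..s} xgap"
    unfolding w_def drift_bound_def by (simp add: algebra_simps power2_eq_square)
  finally show ?thesis using True by simp
next
  case False
  have "xdrift_term a (YN s) n = 0"
    using s False by (simp add: xdrift_term_def u_proj_vanish v_proj_vanish)
  then have "\<bar>xdrift_term a (YN s) n - xdrift_term a (Y s) n\<bar> \<le> drift_bound a y T n"
    using full.abs_xdrift_term_le[OF s, of n] by simp
  moreover have "0 \<le> real n * drift_bound a y T n * xgap s"
    by (simp add: drift_bound_y_nonneg xgap_nonneg)
  moreover have "0 \<le> 2 * (real n * amp a n)\<^sup>2 * integral {0..s} xgap"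
    by (simp add: integral_xgap_nonneg)
  ultimately show ?thesis using False by (simp only: not_le if_True)
qed

lemma xdrift_gap_le:
  assumes s: "s \<in> {0..T}"
  shows "\<bar>(\<Sum>n. xdrift_term a (YN s) n) - (\<Sum>n. xdrift_term a (Y s) n)\<bar>
    \<le> drift_lip a y T * xgap s + 2 * amp_sq_sum a * integral {0..s} xgap
      + tail_sum (drift_bound a y T) N"
proof -
  have bound_sums: "(\<lambda>n. real n * drift_bound a y T n * xgap s
      + 2 * (real n * amp a n)\<^sup>2 * integral {0..s} xgap + (if N < n then drift_bound a y T n else 0))
      sums (drift_lip a y T * xgap s + 2 * amp_sq_sum a * integral {0..s} xgap
        + tail_sum (drift_bound a y T) N)"
    unfolding drift_lip_def amp_sq_sum_def tail_sum_def
    by (intro sums_add sums_mult sums_mult2 summable_sums summable_weighted_drift_bound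
        summable_amp_sq[OF apos asum] summable_tail summable_drift_bound_y)
  have summable_gap: "summable (\<lambda>n. \<bar>xdrift_term a (YN s) n - xdrift_term a (Y s) n\<bar>)"
    by (rule summable_comparison_test'[OF sums_summable[OF bound_sums], where N = 0])
       (simp add: xdrift_term_gap_le[OF s])
  have "(\<Sum>n. xdrift_term a (YN s) n) - (\<Sum>n. xdrift_term a (Y s) n)
      = (\<Sum>n. xdrift_term a (YN s) n - xdrift_term a (Y s) n)"
    using s by (intro suminf_diff summable_xdrift_term_proj summable_xdrift_term_full)
  also have "\<bar>\<dots>\<bar> \<le> (\<Sum>n. \<bar>xdrift_term a (YN s) n - xdrift_term a (Y s) n\<bar>)"
    by (rule summable_rabs[OF summable_gap])
  also have "\<dots> \<le> drift_lip a y T * xgap s + 2 * amp_sq_sum a * integral {0..s} xgap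
      + tail_sum (drift_bound a y T) N"
    by (rule sums_le[OF _ summable_sums[OF summable_gap] bound_sums]) (rule xdrift_term_gap_le[OF s])
  finally show ?thesis .
qed

lemma amp_sq_sum_nonneg: "0 \<le> amp_sq_sum a"
  unfolding amp_sq_sum_def by (intro suminf_nonneg summable_amp_sq[OF apos asum]) simp

lemma drift_lip_nonneg: "0 \<le> drift_lip a y T"
  unfolding drift_lip_def
  by (intro suminf_nonneg summable_weighted_drift_bound) (simp add: drift_bound_y_nonneg)

lemma tail_drift_bound_nonneg: "0 \<le> tail_sum (drift_bound a y T) N"
  by (intro tail_sum_nonneg summable_drift_bound_y drift_bound_y_nonneg)

text \<open>Since \<open>\<integral>\<^sub>0\<^sup>s xgap\<close> is monotone in \<open>s\<close>, inside the integral it is bounded by its value at \<open>t\<close>.\<close>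
lemma xgap_le_integral:
  assumes t: "t \<in> {0..T}"
  shows "xgap t \<le> T * tail_sum (drift_bound a y T) N
    + (drift_lip a y T + 2 * T * amp_sq_sum a) * integral {0..t} xgap"
proof -
  let ?FY = "\<lambda>s. \<Sum>n. xdrift_term a (Y s) n"
  let ?FYN = "\<lambda>s. \<Sum>n. xdrift_term a (YN s) n"
  let ?C = "2 * amp_sq_sum a * integral {0..t} xgap + tail_sum (drift_bound a y T) N"
  have t0: "0 \<le> t" "t \<le> T" using t by auto
  have int_F: "?FY integrable_on {0..t}" "?FYN integrable_on {0..t}"
    using t by (auto intro!: integrable_continuous_interval continuous_on_subset[OF
          full.continuous_on_xdrift] continuous_on_subset[OF proj.continuous_on_xdrift]
          summable_drift_bound_y summable_drift_bound_PiN)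
  have "xgap t = \<bar>integral {0..t} (\<lambda>s. ?FYN s - ?FY s)\<bar>"
    using proj.x_eq[OF t0(1)] full.x_eq[OF t0(1)] int_F
    by (simp add: xgap_def fst_PiN integral_diff)
  also have "\<dots> \<le> integral {0..t} (\<lambda>s. drift_lip a y T * xgap s + ?C)"
  proof (rule integral_norm_bound_integral[where f = "\<lambda>s. ?FYN s - ?FY s", simplified])
    show "(\<lambda>s. drift_lip a y T * xgap s + ?C) integrable_on {0..t}"
      by (intro integrable_add integrable_on_mult_right integrable_xgap integrable_const_ivl) simp
    fix s assume s: "s \<in> {0..t}"
    have "2 * amp_sq_sum a * integral {0..s} xgap \<le> 2 * amp_sq_sum a * integral {0..t} xgap"
      using s amp_sq_sum_nonneg by (intro mult_left_mono integral_xgap_mono) auto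
    then show "\<bar>?FYN s - ?FY s\<bar> \<le> drift_lip a y T * xgap s + ?C"
      using xdrift_gap_le[of s] s t0 by simp
  qed (rule integrable_diff[OF int_F(2,1)])
  also have "\<dots> = drift_lip a y T * integral {0..t} xgap + ?C * t"
    using t0 by (subst integral_add) (auto intro!: integrable_on_mult_right integrable_xgap simp: mult.commute)
  also have "\<dots> \<le> T * tail_sum (drift_bound a y T) N
      + (drift_lip a y T + 2 * T * amp_sq_sum a) * integral {0..t} xgap"
    using t0 mult_right_mono[OF t0(2), of "2 * amp_sq_sum a * integral {0..t} xgap"]
      mult_left_mono[OF t0(2) tail_drift_bound_nonneg] amp_sq_sum_nonneg integral_xgap_nonneg[of t]
    by (simp add: algebra_simps)
  finally show ?thesis .
qed

lemma xgap_le: "t \<in> {0..T} \<Longrightarrow> xgap t \<le> xgap_bound a y T N"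
proof -
  assume t: "t \<in> {0..T}"
  let ?K = "drift_lip a y T + 2 * T * amp_sq_sum a"
  have K: "0 \<le> ?K" using drift_lip_nonneg amp_sq_sum_nonneg Tpos by simp
  have "xgap t \<le> T * tail_sum (drift_bound a y T) N * exp (?K * t)"
    by (rule gronwall_integral_le[OF continuous_on_xgap K xgap_le_integral t]) auto
  also have "\<dots> \<le> T * tail_sum (drift_bound a y T) N * exp (?K * T)"
    using t K Tpos tail_drift_bound_nonneg by (intro mult_left_mono) (auto intro: mult_left_mono)
  finally show ?thesis unfolding xgap_bound_def .
qed

lemma integral_xgap_le: "t \<in> {0..T} \<Longrightarrow> integral {0..t} xgap \<le> T * xgap_bound a y T N"
proof -
  assume t: "t \<in> {0..T}"
  have "integral {0..t} xgap \<le> integral {0..t} (\<lambda>_. xgap_bound a y T N)"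
    using t by (intro integral_le integrable_xgap xgap_le) auto
  also have "\<dots> \<le> T * xgap_bound a y T N"
    using t xgap_le[of 0] Tpos xgap_nonneg[of 0] by (auto intro: mult_right_mono)
  finally show ?thesis .
qed

lemma sum_sq_gap_le:
  fixes p q c :: "nat \<Rightarrow> real"
  assumes t: "t \<in> {0..T}"
    and summable_gap: "summable (\<lambda>n. (p n - q n)\<^sup>2)" and summable_c: "summable (\<lambda>n. (c n)\<^sup>2)"
    and low: "\<And>n. n \<le> N \<Longrightarrow> \<bar>p n - q n\<bar> \<le> real n * amp a n * integral {0..t} xgap"
    and high: "\<And>n. N < n \<Longrightarrow> p n = 0"
    and q_bound: "\<And>n. \<bar>q n\<bar> \<le> \<bar>c n\<bar> + amp a n * t"
  shows "(\<Sum>n. (p n - q n)\<^sup>2) \<le> amp_sq_sum a * (T * xgap_bound a y T N)\<^sup>2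
    + tail_sum (\<lambda>n. 2 * (c n)\<^sup>2 + 2 * (amp a n * T)\<^sup>2) N"
proof (rule sums_le[OF _ summable_sums[OF summable_gap]])
  show "(\<lambda>n. (real n * amp a n)\<^sup>2 * (T * xgap_bound a y T N)\<^sup>2
      + (if N < n then 2 * (c n)\<^sup>2 + 2 * (amp a n * T)\<^sup>2 else 0))
    sums (amp_sq_sum a * (T * xgap_bound a y T N)\<^sup>2
      + tail_sum (\<lambda>n. 2 * (c n)\<^sup>2 + 2 * (amp a n * T)\<^sup>2) N)"
    unfolding amp_sq_sum_def tail_sum_def
    by (intro sums_add sums_mult2 summable_sums summable_amp_sq[OF apos asum] summable_tail
        summable_tail_weight[OF apos asum summable_c])
next
  fix n
  have t0: "0 \<le> t" "t \<le> T" using t by auto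
  show "(p n - q n)\<^sup>2 \<le> (real n * amp a n)\<^sup>2 * (T * xgap_bound a y T N)\<^sup>2
      + (if N < n then 2 * (c n)\<^sup>2 + 2 * (amp a n * T)\<^sup>2 else 0)"
  proof (cases "n \<le> N")
    case True
    have "\<bar>p n - q n\<bar> \<le> real n * amp a n * (T * xgap_bound a y T N)"
      using low[OF True] integral_xgap_le[OF t] full.amp_nonneg
      by (meson order_trans mult_left_mono mult_nonneg_nonneg of_nat_0_le_iff)
    then have "(p n - q n)\<^sup>2 \<le> (real n * amp a n * (T * xgap_bound a y T N))\<^sup>2"
      by (rule abs_le_imp_sq_le)
    then show ?thesis using True by (simp add: power_mult_distrib)
  next
    case False
    have "\<bar>q n\<bar> \<le> \<bar>c n\<bar> + \<bar>amp a n * T\<bar>"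
      using q_bound[of n] mult_left_mono[OF t0(2) full.amp_nonneg[of n]] full.amp_nonneg[of n] Tpos by simp
    then have "(q n)\<^sup>2 \<le> (\<bar>c n\<bar> + \<bar>amp a n * T\<bar>)\<^sup>2"
      by (rule abs_le_imp_sq_le)
    also have "\<dots> \<le> 2 * (c n)\<^sup>2 + 2 * (amp a n * T)\<^sup>2"
      using zero_le_power2[of "\<bar>c n\<bar> - \<bar>amp a n * T\<bar>"] by (simp add: power2_eq_square algebra_simps)
    finally show ?thesis using False high[of n] by (simp add: add_increasing)
  qed
qed

lemma hnorm2_gap_le:
  assumes t: "t \<in> {0..T}"
  shows "hnorm2 (hsub (YN t) (Y t)) \<le> gap_bound a y T N"
proof -
  have t0: "0 \<le> t" using t by simp
  have inH: "inH (YN t)" "inH (Y t)" using proj.inH full.inH t0 by auto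
  have "(fst (YN t) - fst (Y t))\<^sup>2 \<le> (xgap_bound a y T N)\<^sup>2"
    using xgap_le[OF t] unfolding xgap_def by (rule abs_le_imp_sq_le)
  moreover have "(\<Sum>n. (fst (snd (YN t)) n - fst (snd (Y t)) n)\<^sup>2) \<le> amp_sq_sum a * (T * xgap_bound a y T N)\<^sup>2
      + tail_sum (\<lambda>n. 2 * (fst (snd y) n)\<^sup>2 + 2 * (amp a n * T)\<^sup>2) N"
    by (rule sum_sq_gap_le[OF t hnorm2_hsub(2)[OF inH] inH_summable_u[OF yH] u_gap_le[OF t0]
          u_proj_vanish[OF t0] full.u_bound[OF t0]])
  moreover have "(\<Sum>n. (snd (snd (YN t)) n - snd (snd (Y t)) n)\<^sup>2) \<le> amp_sq_sum a * (T * xgap_bound a y T N)\<^sup>2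
      + tail_sum (\<lambda>n. 2 * (snd (snd y) n)\<^sup>2 + 2 * (amp a n * T)\<^sup>2) N"
    by (rule sum_sq_gap_le[OF t hnorm2_hsub(3)[OF inH] inH_summable_v[OF yH] v_gap_le[OF t0]
          v_proj_vanish[OF t0] full.v_bound[OF t0]])
  ultimately show ?thesis
    unfolding hnorm2_hsub(1)[OF inH] gap_bound_def by (simp add: algebra_simps)
qed

lemma SUP_hnorm2_gap_nonneg: "0 \<le> (SUP t\<in>{0..T}. hnorm2 (hsub (YN t) (Y t)))"
  and SUP_hnorm2_gap_le: "(SUP t\<in>{0..T}. hnorm2 (hsub (YN t) (Y t))) \<le> gap_bound a y T N"
  using Tpos by (auto intro!: cSUP_nonneg_le hnorm2_gap_le hnorm2_hsub_nonneg proj.inH full.inH)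

end

lemma gap_bound_tendsto_zero:
  assumes apos: "\<forall>n\<ge>1. 0 < a n"
    and asum: "summable (\<lambda>n. (1 + (real n)\<^sup>2) ^ 5 * (a n)\<^sup>2)"
    and yH: "inH y" and T: "0 \<le> T"
  shows "gap_bound a y T \<longlonglongrightarrow> 0"
proof -
  have "xgap_bound a y T \<longlonglongrightarrow> 0"
    unfolding xgap_bound_def[abs_def]
    using tail_sum_tendsto_zero[OF summable_drift_bound(2)[OF apos asum yH T]]
    by (intro tendsto_mult_left_zero tendsto_mult_right_zero)
  then have "(\<lambda>N. (xgap_bound a y T N)\<^sup>2) \<longlonglongrightarrow> 0"
    using tendsto_power[of "xgap_bound a y T" 0 _ 2] by simp
  then show ?thesis
    unfolding gap_bound_def[abs_def]
    by (intro tendsto_add_zero tendsto_mult_right_zero tail_sum_tendsto_zero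
        summable_tail_weight[OF apos asum] inH_summable_u inH_summable_v yH)
qed

theorem lemma1:
  fixes a :: "nat \<Rightarrow> real" and beta :: "real \<Rightarrow> real" and y :: hpt
    and Y :: "real \<Rightarrow> hpt" and YN :: "nat \<Rightarrow> real \<Rightarrow> hpt" and T :: real
  assumes apos: "\<forall>n\<ge>1. a n > 0"
    and asum: "summable (\<lambda>n. (1 + (real n)\<^sup>2) ^ 5 * (a n)\<^sup>2)"
    and beta_cont: "continuous_on {0..} beta" and beta0: "beta 0 = 0"
    and yH: "inH y"
    and Ysol: "is_solution (Fdrift a) beta y Y"
    and YNsol: "\<forall>N\<ge>1. is_solution (\<lambda>z. PiN N (Fdrift a z)) beta (PiN N y) (YN N)"
    and Tpos: "T > 0"
  shows "(\<lambda>N. SUP t\<in>{0..T}. hnorm2 (hsub (YN N t) (Y t))) \<longlonglongrightarrow> 0"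
proof (rule tendsto_sandwich[OF _ _ tendsto_const gap_bound_tendsto_zero[OF apos asum yH]])
  have pair: "galerkin_pair a beta y Y (YN N) N T" if "1 \<le> N" for N
    using apos asum yH Ysol YNsol Tpos that by unfold_locales auto
  show "\<forall>\<^sub>F N in sequentially. 0 \<le> (SUP t\<in>{0..T}. hnorm2 (hsub (YN N t) (Y t)))"
    using galerkin_pair.SUP_hnorm2_gap_nonneg[OF pair] by (auto simp: eventually_sequentially)
  show "\<forall>\<^sub>F N in sequentially. (SUP t\<in>{0..T}. hnorm2 (hsub (YN N t) (Y t))) \<le> gap_bound a y T N"
    using galerkin_pair.SUP_hnorm2_gap_le[OF pair] by (auto simp: eventually_sequentially)
qed (use Tpos in simp)

end
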